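(* Let $(P,Q)$ be a global solution of the Cucker–Smale model with velocity control described in the context, with initial data $(P^0,Q^0)$. Then: (1) $\sum_{k=1}^N p_k(t)$ is conserved: $\frac{d}{dt}\sum_{k=1}^N p_k(t)=0$. (2) $\max_{i\in[N]}|p_i(t)|\le\max_{i\in[N]}|p_i(s)|$ for $0\le s\le t$; in particular $\sup_{t\ge0}\max_{i}|p_i(t)|=\max_i|p_i^0|=P^0_M$. (3) For all $t\in\mathbb R_+$ and $i,j\in[N]$, $m_{G'}|p_i(t)-p_j(t)|\le|G(p_i(t))-G(p_j(t))|\le M_{G'}|p_i(t)-p_j(t)|$. (4) There exists a positive constant $\mathcal M=\mathcal M(P^0)>0$ such that $\mathcal M|p_i(t)-p_j(t)|^2\le(p_i(t)-p_j(t))\cdot(G(p_i(t))-G(p_j(t)))$ for all $t\in\mathbb R_+$ and $i,j\in[N]$.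
   Context: Let $N\ge1$, $d\ge1$, $\kappa>0$, $[N]=\{1,\dots,N\}$, $\mathbb R_+=(0,\infty)$. The velocity control function $G:\mathbb R^d\to\mathbb R^d$ is $G(p)=g(|p|)\,p/|p|$ for $p\ne0$, $G(0)=0$, with $g\in C^1([0,\infty))$, $g(0)=0$, $0<m\le g'\le M$ on every compact interval (constants depending on the interval), and $g$ convex or concave on $(0,\infty)$. The kernel $\psi:\mathbb R_+\to\mathbb R_+$ is bounded, Lipschitz continuous and nonincreasing. The model is, for $i\in[N]$, $t>0$: \[ \dot q_i=G(p_i),\qquad \dot p_i=\frac{\kappa}{N}\sum_{k=1}^N\psi(|q_k-q_i|)\big(G(p_k)-G(p_i)\big),\qquad (q_i,p_i)(0)=(q_i^0,p_i^0)\in\mathbb R^d\times\mathbb R^d. \] Notation: $P^0_M=\max_i|p_i^0|$, $M_{G'}=\max\{g'(|p|):|p|\le P^0_M\}$, $m_{G'}=\min\{g'(|p|):|p|\le P^0_M\}$. *)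

theory Defs
  imports "HOL-Analysis.Analysis"
begin

definition velG :: "(real \<Rightarrow> real) \<Rightarrow> 'a::real_normed_vector \<Rightarrow> 'a" where
  "velG g p = (if p = 0 then 0 else (g (norm p) / norm p) *\<^sub>R p)"

end

theory Submission
  imports Defs
begin

(* Summing the equations, the interaction terms cancel in pairs because the weights
   psi(|q_k - q_i|) are symmetric, so the total momentum is conserved. If |p_j| is maximal,
   then p_j . G(p_k) <= |p_j| g(|p_k|) <= p_j . G(p_j) for every k, since G is radial with a
   nonnegative nondecreasing profile g; hence d/dt |p_j|^2 <= 0 whenever |p_j| is maximal, and
   a maximum principle for finite families of functions makes max_i |p_i| nonincreasing.
   All velocities therefore stay in the ball of radius P0M, where the mean value theorem gives
   mG' (b - a) <= g b - g a <= MG' (b - a). Writing G(x) = (g(|x|)/|x|) x, the quantities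
   (x - y) . (G x - G y) and |G x - G y|^2 are affine in x . y, which ranges over
   [-|x||y|, |x||y|]; at the two endpoints the vector inequalities reduce to these scalar ones. *)

section \<open>A maximum principle for finite families of functions\<close>

lemma eventually_le_affine_at_right:
  fixes f :: "real \<Rightarrow> real"
  assumes cont: "(f \<longlongrightarrow> f \<tau>) (at_right \<tau>)" and le: "f \<tau> \<le> c" and e: "0 < e"
    and deriv: "f \<tau> = c \<Longrightarrow> \<exists>d\<le>0. (f has_real_derivative d) (at_right \<tau>)"
  shows "eventually (\<lambda>x. f x \<le> c + e * (x - \<tau>)) (at_right \<tau>)"
proof (cases "f \<tau> < c")
  case True
  have "eventually (\<lambda>x. f x < c) (at_right \<tau>)"
    using cont True order_tendstoD(2) by blast
  moreover have "eventually (\<lambda>x. \<tau> < x) (at_right \<tau>)"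
    by (simp add: eventually_at_right_less)
  ultimately show ?thesis
    by eventually_elim (use e in \<open>simp add: add_increasing2 less_imp_le\<close>)
next
  case False
  with le have eq: "f \<tau> = c" by simp
  then obtain d where "d \<le> 0" and "(f has_real_derivative d) (at_right \<tau>)"
    using deriv by blast
  then have "((\<lambda>y. (f y - f \<tau>) / (y - \<tau>)) \<longlongrightarrow> d) (at_right \<tau>)"
    using has_field_derivative_iff by blast
  then have "eventually (\<lambda>y. (f y - f \<tau>) / (y - \<tau>) < e) (at_right \<tau>)"
    using order_tendstoD(2) \<open>d \<le> 0\<close> e by fastforce
  moreover have "eventually (\<lambda>x. \<tau> < x) (at_right \<tau>)"
    by (simp add: eventually_at_right_less)
  ultimately show ?thesis
    by eventually_elim (use eq in \<open>simp add: pos_divide_less_eq algebra_simps\<close>)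
qed

(* The slope e > 0 lets the barrier strictly outrun any f j that touches it with f' j <= 0. *)
lemma finite_family_eventually_le_barrier:
  fixes f f' :: "'i \<Rightarrow> real \<Rightarrow> real"
  assumes fin: "finite I" and "s \<le> \<tau>" and "\<tau> < t" and e: "0 < e"
    and cont: "\<forall>j\<in>I. continuous_on {s..t} (f j)"
    and deriv: "\<forall>j\<in>I. \<forall>x\<in>{s<..<t}. (f j has_real_derivative f' j x) (at x)"
    and max_deriv: "\<forall>j\<in>I. \<forall>x\<in>{s<..<t}. (\<forall>k\<in>I. f k x \<le> f j x) \<longrightarrow> f' j x \<le> 0"
    and init: "\<forall>j\<in>I. f j s \<le> C"
    and below: "\<forall>j\<in>I. f j \<tau> \<le> C + e * (\<tau> - s + 1)"
  shows "eventually (\<lambda>x. \<forall>j\<in>I. f j x \<le> C + e * (x - s + 1)) (at_right \<tau>)"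
proof -
  have "eventually (\<lambda>x. f j x \<le> C + e * (x - s + 1)) (at_right \<tau>)" if j: "j \<in> I" for j
  proof -
    have "eventually (\<lambda>x. f j x \<le> C + e * (\<tau> - s + 1) + e * (x - \<tau>)) (at_right \<tau>)"
    proof (rule eventually_le_affine_at_right)
      have "continuous_on {\<tau>..t} (f j)"
        using cont j \<open>s \<le> \<tau>\<close> continuous_on_subset[of "{s..t}" "f j" "{\<tau>..t}"] by auto
      then have "(f j \<longlongrightarrow> f j \<tau>) (at \<tau> within {\<tau>..t})"
        using \<open>\<tau> < t\<close> by (simp add: continuous_on_def)
      then show "(f j \<longlongrightarrow> f j \<tau>) (at_right \<tau>)"
        using at_within_Icc_at_right[OF \<open>\<tau> < t\<close>] by simp
      show "f j \<tau> \<le> C + e * (\<tau> - s + 1)" using below j by blast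
      show "0 < e" by (fact e)
      assume touching: "f j \<tau> = C + e * (\<tau> - s + 1)"
      then have "\<tau> \<noteq> s"
        using init j e by fastforce
      moreover have "\<forall>k\<in>I. f k \<tau> \<le> f j \<tau>"
        using below touching by simp
      ultimately have "f' j \<tau> \<le> 0" and "(f j has_real_derivative f' j \<tau>) (at_right \<tau>)"
        using deriv max_deriv j \<open>s \<le> \<tau>\<close> \<open>\<tau> < t\<close> by (auto intro: has_field_derivative_at_within)
      then show "\<exists>d\<le>0. (f j has_real_derivative d) (at_right \<tau>)" by blast
    qed
    then show ?thesis by (simp add: algebra_simps)
  qed
  then show ?thesis
    by (intro eventually_ball_finite[OF fin]) blast
qed

lemma finite_family_le_affine_barrier:
  fixes f f' :: "'i \<Rightarrow> real \<Rightarrow> real"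
  assumes fin: "finite I" and st: "s \<le> t" and e: "0 < e"
    and cont: "\<forall>j\<in>I. continuous_on {s..t} (f j)"
    and deriv: "\<forall>j\<in>I. \<forall>x\<in>{s<..<t}. (f j has_real_derivative f' j x) (at x)"
    and max_deriv: "\<forall>j\<in>I. \<forall>x\<in>{s<..<t}. (\<forall>k\<in>I. f k x \<le> f j x) \<longrightarrow> f' j x \<le> 0"
    and init: "\<forall>j\<in>I. f j s \<le> C"
  shows "\<forall>j\<in>I. f j t \<le> C + e * (t - s + 1)"
proof -
  define A where "A = {x\<in>{s..t}. \<forall>j\<in>I. f j x \<le> C + e * (x - s + 1)}"
  have "A = {s..t} \<inter> (\<Inter>j\<in>I. {x\<in>{s..t}. f j x \<le> C + e * (x - s + 1)})"
    unfolding A_def by auto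
  then have "closed A"
    by (simp only:) (intro closed_Int closed_INT ballI continuous_on_closed_Collect_le,
        use cont in \<open>auto intro!: continuous_intros\<close>)
  moreover have "s \<in> A" and "bdd_above A"
    using st e init unfolding A_def by (auto intro: bdd_aboveI[where M=t])
  ultimately have "Sup A \<in> A"
    using closed_contains_Sup by blast
  have "Sup A = t"
  proof (rule ccontr)
    assume "Sup A \<noteq> t"
    with \<open>Sup A \<in> A\<close> have "s \<le> Sup A" "Sup A < t" "\<forall>j\<in>I. f j (Sup A) \<le> C + e * (Sup A - s + 1)"
      unfolding A_def by auto
    then have "eventually (\<lambda>x. \<forall>j\<in>I. f j x \<le> C + e * (x - s + 1)) (at_right (Sup A))"
      by (intro finite_family_eventually_le_barrier[OF fin _ _ e cont deriv max_deriv init])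
    moreover have "eventually (\<lambda>x. Sup A < x) (at_right (Sup A))"
      by (simp add: eventually_at_right_less)
    moreover have "eventually (\<lambda>x. x < t) (at_right (Sup A))"
      unfolding eventually_at_right_field using \<open>Sup A < t\<close> by blast
    ultimately have "eventually (\<lambda>x. x \<in> A \<and> Sup A < x) (at_right (Sup A))"
      by eventually_elim (use \<open>s \<le> Sup A\<close> in \<open>auto simp: A_def\<close>)
    then obtain x where "x \<in> A" and "Sup A < x"
      using eventually_happens'[OF trivial_limit_at_right_real] by blast
    then show False
      using cSup_upper[OF \<open>x \<in> A\<close> \<open>bdd_above A\<close>] by simp
  qed
  with \<open>Sup A \<in> A\<close> show ?thesis unfolding A_def by simp
qed

lemma finite_family_max_principle:
  fixes f f' :: "'i \<Rightarrow> real \<Rightarrow> real"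
  assumes fin: "finite I" and st: "s \<le> t"
    and cont: "\<forall>j\<in>I. continuous_on {s..t} (f j)"
    and deriv: "\<forall>j\<in>I. \<forall>x\<in>{s<..<t}. (f j has_real_derivative f' j x) (at x)"
    and max_deriv: "\<forall>j\<in>I. \<forall>x\<in>{s<..<t}. (\<forall>k\<in>I. f k x \<le> f j x) \<longrightarrow> f' j x \<le> 0"
    and init: "\<forall>j\<in>I. f j s \<le> C"
  shows "\<forall>j\<in>I. f j t \<le> C"
proof
  fix j assume "j \<in> I"
  show "f j t \<le> C"
  proof (rule field_le_epsilon)
    fix e :: real assume "0 < e"
    with st have "0 < e / (t - s + 1)" by simp
    from finite_family_le_affine_barrier[OF fin st this cont deriv max_deriv init] \<open>j \<in> I\<close>
    have "f j t \<le> C + e / (t - s + 1) * (t - s + 1)" by blast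
    with st show "f j t \<le> C + e" by simp
  qed
qed

section \<open>The velocity control function\<close>

lemma velG_eq_scaleR: "velG g v = (g (norm v) / norm v) *\<^sub>R v"
  by (simp add: velG_def)

lemma inner_velG_self: "v \<bullet> velG g v = norm v * g (norm v)"
  for v :: "'a::real_inner"
  by (cases "v = 0") (simp_all add: velG_eq_scaleR dot_square_norm power2_eq_square)

lemma norm_velG: "g 0 = 0 \<Longrightarrow> norm (velG g v) = \<bar>g (norm v)\<bar>"
  by (cases "v = 0") (simp_all add: velG_eq_scaleR)

lemma inner_velG_le_inner_velG_self:
  fixes x y :: "'a::real_inner"
  assumes "g 0 = 0" and "0 \<le> g (norm y)" and "g (norm y) \<le> g (norm x)"
  shows "x \<bullet> velG g y \<le> x \<bullet> velG g x"
proof -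
  have "x \<bullet> velG g y \<le> norm x * norm (velG g y)" by (rule norm_cauchy_schwarz)
  also have "\<dots> = norm x * g (norm y)" using assms by (simp add: norm_velG)
  also have "\<dots> \<le> norm x * g (norm x)" using assms by (simp add: mult_left_mono)
  also have "\<dots> = x \<bullet> velG g x" by (simp add: inner_velG_self)
  finally show ?thesis .
qed

lemma inner_diff_velG:
  fixes x y :: "'a::real_inner"
  shows "(x - y) \<bullet> (velG g x - velG g y) = norm x * g (norm x) + norm y * g (norm y)
           - (x \<bullet> y) * (g (norm x) / norm x + g (norm y) / norm y)"
proof -
  have "x \<bullet> velG g y = g (norm y) / norm y * (x \<bullet> y)"
    and "y \<bullet> velG g x = g (norm x) / norm x * (x \<bullet> y)"
    by (simp_all add: velG_eq_scaleR inner_commute)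
  then show ?thesis
    by (simp add: inner_diff_left inner_diff_right inner_velG_self inner_commute[of "velG g _"]
        algebra_simps)
qed

lemma norm_diff_velG_squared:
  fixes x y :: "'a::real_inner"
  assumes "g 0 = 0"
  shows "(norm (velG g x - velG g y))\<^sup>2 = (g (norm x))\<^sup>2 + (g (norm y))\<^sup>2
           - 2 * (g (norm x) / norm x) * (g (norm y) / norm y) * (x \<bullet> y)"
proof -
  have "velG g x \<bullet> velG g y = (g (norm x) / norm x) * (g (norm y) / norm y) * (x \<bullet> y)"
    by (simp add: velG_eq_scaleR ac_simps)
  moreover have "velG g v \<bullet> velG g v = (g (norm v))\<^sup>2" for v :: 'a
    using assms by (simp add: dot_square_norm norm_velG)
  ultimately show ?thesis
    by (simp add: power2_norm_eq_inner inner_diff_left inner_diff_right inner_commute)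
qed

lemma norm_diff_squared: "(norm (x - y))\<^sup>2 = (norm x)\<^sup>2 + (norm y)\<^sup>2 - 2 * (x \<bullet> y)"
  for x y :: "'a::real_inner"
  by (simp add: power2_norm_eq_inner inner_diff_left inner_diff_right inner_commute)

lemma affine_nonneg_if_nonneg_at_endpoints:
  fixes A B w k :: real
  assumes "\<bar>w\<bar> \<le> k" and "0 \<le> A - k * B" and "0 \<le> A + k * B"
  shows "0 \<le> A - w * B"
proof (cases "0 \<le> B")
  case True
  then have "w * B \<le> k * B" using assms(1) by (intro mult_right_mono) auto
  then show ?thesis using assms by linarith
next
  case False
  then have "w * B \<le> (- k) * B" using assms(1) by (intro mult_right_mono_neg) auto
  then show ?thesis using assms by linarith
qed

lemma inner_diff_velG_ge:
  fixes x y :: "'a::real_inner"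
  assumes g0: "g 0 = 0"
    and "m * norm x \<le> g (norm x)" and "m * norm y \<le> g (norm y)"
    and "m * (norm x - norm y)\<^sup>2 \<le> (norm x - norm y) * (g (norm x) - g (norm y))"
  shows "m * (norm (x - y))\<^sup>2 \<le> (x - y) \<bullet> (velG g x - velG g y)"
proof -
  define a b where "a = norm x" and "b = norm y"
  define \<alpha> \<beta> where "\<alpha> = g a / a" and "\<beta> = g b / b"
  have \<alpha>: "g a = \<alpha> * a" and \<beta>: "g b = \<beta> * b"
    using g0 by (auto simp: \<alpha>_def \<beta>_def)
  have "0 \<le> (a * g a + b * g b - m * (a\<^sup>2 + b\<^sup>2)) - (x \<bullet> y) * (\<alpha> + \<beta> - 2 * m)"
  proof (rule affine_nonneg_if_nonneg_at_endpoints)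
    show "\<bar>x \<bullet> y\<bar> \<le> a * b"
      unfolding a_def b_def by (rule Cauchy_Schwarz_ineq2)
    have "(a * g a + b * g b - m * (a\<^sup>2 + b\<^sup>2)) - a * b * (\<alpha> + \<beta> - 2 * m)
        = (a - b) * (g a - g b) - m * (a - b)\<^sup>2"
      by (simp add: \<alpha> \<beta> algebra_simps power2_eq_square)
    then show "0 \<le> (a * g a + b * g b - m * (a\<^sup>2 + b\<^sup>2)) - a * b * (\<alpha> + \<beta> - 2 * m)"
      using assms(4) unfolding a_def b_def by linarith
    have "(a * g a + b * g b - m * (a\<^sup>2 + b\<^sup>2)) + a * b * (\<alpha> + \<beta> - 2 * m)
        = (a + b) * ((g a - m * a) + (g b - m * b))"
      by (simp add: \<alpha> \<beta> algebra_simps power2_eq_square)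
    moreover have "0 \<le> (a + b) * ((g a - m * a) + (g b - m * b))"
      using assms(2,3) unfolding a_def b_def by simp
    ultimately show "0 \<le> (a * g a + b * g b - m * (a\<^sup>2 + b\<^sup>2)) + a * b * (\<alpha> + \<beta> - 2 * m)"
      by linarith
  qed
  then show ?thesis
    unfolding inner_diff_velG norm_diff_squared a_def b_def \<alpha>_def \<beta>_def
    by (simp add: algebra_simps)
qed

lemma norm_diff_velG_le:
  fixes x y :: "'a::real_inner"
  assumes g0: "g 0 = 0" and "0 \<le> M"
    and "0 \<le> g (norm x)" and "g (norm x) \<le> M * norm x"
    and "0 \<le> g (norm y)" and "g (norm y) \<le> M * norm y"
    and "\<bar>g (norm x) - g (norm y)\<bar> \<le> M * \<bar>norm x - norm y\<bar>"
  shows "norm (velG g x - velG g y) \<le> M * norm (x - y)"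
proof -
  define a b where "a = norm x" and "b = norm y"
  define \<alpha> \<beta> where "\<alpha> = g a / a" and "\<beta> = g b / b"
  have \<alpha>: "g a = \<alpha> * a" and \<beta>: "g b = \<beta> * b"
    using g0 by (auto simp: \<alpha>_def \<beta>_def)
  have "0 \<le> (M\<^sup>2 * (a\<^sup>2 + b\<^sup>2) - (g a)\<^sup>2 - (g b)\<^sup>2) - (x \<bullet> y) * (2 * M\<^sup>2 - 2 * \<alpha> * \<beta>)"
  proof (rule affine_nonneg_if_nonneg_at_endpoints)
    show "\<bar>x \<bullet> y\<bar> \<le> a * b"
      unfolding a_def b_def by (rule Cauchy_Schwarz_ineq2)
    have "(g a - g b)\<^sup>2 \<le> (M * (a - b))\<^sup>2"
      using assms(7) unfolding a_def b_def
      by (metis abs_ge_zero abs_mult abs_of_nonneg assms(2) power2_abs power_mono)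
    moreover have "(M\<^sup>2 * (a\<^sup>2 + b\<^sup>2) - (g a)\<^sup>2 - (g b)\<^sup>2) - a * b * (2 * M\<^sup>2 - 2 * \<alpha> * \<beta>)
        = (M * (a - b))\<^sup>2 - (g a - g b)\<^sup>2"
      by (simp add: \<alpha> \<beta> algebra_simps power2_eq_square)
    ultimately show "0 \<le> (M\<^sup>2 * (a\<^sup>2 + b\<^sup>2) - (g a)\<^sup>2 - (g b)\<^sup>2) - a * b * (2 * M\<^sup>2 - 2 * \<alpha> * \<beta>)"
      by linarith
    have "(g a + g b)\<^sup>2 \<le> (M * (a + b))\<^sup>2"
      using assms(3-6) unfolding a_def b_def by (intro power_mono) (auto simp: algebra_simps)
    moreover have "(M\<^sup>2 * (a\<^sup>2 + b\<^sup>2) - (g a)\<^sup>2 - (g b)\<^sup>2) + a * b * (2 * M\<^sup>2 - 2 * \<alpha> * \<beta>)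
        = (M * (a + b))\<^sup>2 - (g a + g b)\<^sup>2"
      by (simp add: \<alpha> \<beta> algebra_simps power2_eq_square)
    ultimately show "0 \<le> (M\<^sup>2 * (a\<^sup>2 + b\<^sup>2) - (g a)\<^sup>2 - (g b)\<^sup>2) + a * b * (2 * M\<^sup>2 - 2 * \<alpha> * \<beta>)"
      by linarith
  qed
  moreover have "(norm (velG g x - velG g y))\<^sup>2 = (g a)\<^sup>2 + (g b)\<^sup>2 - 2 * \<alpha> * \<beta> * (x \<bullet> y)"
    unfolding norm_diff_velG_squared[of g, OF g0] a_def b_def \<alpha>_def \<beta>_def ..
  moreover have "(M * norm (x - y))\<^sup>2 = M\<^sup>2 * (a\<^sup>2 + b\<^sup>2) - 2 * M\<^sup>2 * (x \<bullet> y)"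
    unfolding power_mult_distrib norm_diff_squared a_def b_def by (simp add: algebra_simps)
  moreover have "(x \<bullet> y) * (2 * M\<^sup>2 - 2 * \<alpha> * \<beta>) = 2 * M\<^sup>2 * (x \<bullet> y) - 2 * \<alpha> * \<beta> * (x \<bullet> y)"
    by (simp add: algebra_simps)
  ultimately have "(norm (velG g x - velG g y))\<^sup>2 \<le> (M * norm (x - y))\<^sup>2"
    by linarith
  then show ?thesis
    using \<open>0 \<le> M\<close> by (rule power2_le_imp_le[OF _ mult_nonneg_nonneg[OF _ norm_ge_zero]])
qed

lemma mvt_within:
  fixes g g' :: "real \<Rightarrow> real"
  assumes "a \<le> b" and "{a..b} \<subseteq> S"
    and deriv: "\<And>r. r \<in> S \<Longrightarrow> (g has_real_derivative g' r) (at r within S)"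
  obtains r where "r \<in> {a..b}" and "g b - g a = g' r * (b - a)"
proof -
  have "(g has_derivative (*) (g' r)) (at r within {a..b})" if "a \<le> r" "r \<le> b" for r
    using has_field_derivative_subset[OF deriv \<open>{a..b} \<subseteq> S\<close>] that \<open>{a..b} \<subseteq> S\<close>
    by (auto simp: has_field_derivative_def)
  then show ?thesis
    using mvt_very_simple[OF \<open>a \<le> b\<close>, of g "\<lambda>r. (*) (g' r)"] that by auto
qed

lemma difference_bounds_of_deriv_bounds:
  fixes g g' :: "real \<Rightarrow> real"
  assumes "a \<le> b" and "{a..b} \<subseteq> S"
    and deriv: "\<And>r. r \<in> S \<Longrightarrow> (g has_real_derivative g' r) (at r within S)"
    and bounds: "\<And>r. r \<in> {a..b} \<Longrightarrow> m \<le> g' r \<and> g' r \<le> M"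
  shows "m * (b - a) \<le> g b - g a \<and> g b - g a \<le> M * (b - a)"
proof -
  obtain r where r: "r \<in> {a..b}" and "g b - g a = g' r * (b - a)"
    using mvt_within[OF \<open>a \<le> b\<close> \<open>{a..b} \<subseteq> S\<close> deriv] by blast
  moreover have "m * (b - a) \<le> g' r * (b - a)" and "g' r * (b - a) \<le> M * (b - a)"
    using bounds[OF r] \<open>a \<le> b\<close> by (auto intro: mult_right_mono)
  ultimately show ?thesis by simp
qed

lemma inner_velG_le_inner_velG_self_of_deriv_nonneg:
  fixes u v :: "'a::real_inner" and g g' :: "real \<Rightarrow> real"
  assumes g0: "g 0 = 0"
    and deriv: "\<And>r. r \<in> {0..} \<Longrightarrow> (g has_real_derivative g' r) (at r within {0..})"
    and nonneg: "\<And>r. 0 \<le> r \<Longrightarrow> 0 \<le> g' r" and "norm v \<le> norm u"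
  shows "u \<bullet> velG g v \<le> u \<bullet> velG g u"
proof -
  have mono: "g a \<le> g b" if "0 \<le> a" and "a \<le> b" for a b
  proof -
    obtain r where "r \<in> {a..b}" and "g b - g a = g' r * (b - a)"
      using mvt_within[OF \<open>a \<le> b\<close> _ deriv] \<open>0 \<le> a\<close> by auto
    moreover have "0 \<le> g' r * (b - a)"
      using nonneg[of r] \<open>r \<in> {a..b}\<close> \<open>0 \<le> a\<close> \<open>a \<le> b\<close> by simp
    ultimately show ?thesis by simp
  qed
  show ?thesis
    using mono[of 0 "norm v"] mono[of "norm v" "norm u"] g0 \<open>norm v \<le> norm u\<close>
    by (intro inner_velG_le_inner_velG_self[where g=g, OF g0]) simp_all
qed

lemma symmetric_difference_bounds:
  fixes g :: "real \<Rightarrow> real"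
  assumes diff: "\<And>u v. u \<in> S \<Longrightarrow> v \<in> S \<Longrightarrow> u \<le> v \<Longrightarrow>
                    m * (v - u) \<le> g v - g u \<and> g v - g u \<le> M * (v - u)"
    and "0 \<le> m" and "a \<in> S" and "b \<in> S"
  shows "m * (a - b)\<^sup>2 \<le> (a - b) * (g a - g b)" and "\<bar>g a - g b\<bar> \<le> M * \<bar>a - b\<bar>"
proof -
  have ordered: "m * (v - u)\<^sup>2 \<le> (v - u) * (g v - g u) \<and> \<bar>g v - g u\<bar> \<le> M * \<bar>v - u\<bar>"
    if "u \<in> S" "v \<in> S" "u \<le> v" for u v
  proof -
    have lower: "m * (v - u) \<le> g v - g u" and upper: "g v - g u \<le> M * (v - u)"
      using diff[OF that] by auto
    have "m * (v - u)\<^sup>2 = m * (v - u) * (v - u)" by (simp add: power2_eq_square)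
    also have "\<dots> \<le> (g v - g u) * (v - u)"
      using lower \<open>u \<le> v\<close> by (intro mult_right_mono) simp_all
    finally have "m * (v - u)\<^sup>2 \<le> (v - u) * (g v - g u)" by (simp only: mult.commute)
    moreover have "0 \<le> g v - g u"
      using lower mult_nonneg_nonneg[of m "v - u"] \<open>0 \<le> m\<close> \<open>u \<le> v\<close> by linarith
    ultimately show ?thesis
      using upper \<open>u \<le> v\<close> by simp
  qed
  have "m * (a - b)\<^sup>2 \<le> (a - b) * (g a - g b) \<and> \<bar>g a - g b\<bar> \<le> M * \<bar>a - b\<bar>"
  proof (cases "b \<le> a")
    case True
    then show ?thesis using ordered[of b a] \<open>a \<in> S\<close> \<open>b \<in> S\<close> by simp
  next
    case False
    have "(a - b)\<^sup>2 = (b - a)\<^sup>2" and "(a - b) * (g a - g b) = (b - a) * (g b - g a)"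
      by (simp_all add: power2_commute algebra_simps)
    with False show ?thesis
      using ordered[of a b] \<open>a \<in> S\<close> \<open>b \<in> S\<close> by (simp add: abs_minus_commute)
  qed
  then show "m * (a - b)\<^sup>2 \<le> (a - b) * (g a - g b)" and "\<bar>g a - g b\<bar> \<le> M * \<bar>a - b\<bar>"
    by auto
qed

lemma mult_norm_le_of_mult_norm_squared_le_inner:
  fixes u v :: "'a::real_inner"
  assumes "m * (norm u)\<^sup>2 \<le> u \<bullet> v"
  shows "m * norm u \<le> norm v"
proof (cases "u = 0")
  case False
  have "m * norm u * norm u = m * (norm u)\<^sup>2" by (simp add: power2_eq_square)
  also have "\<dots> \<le> u \<bullet> v" by (fact assms)
  also have "\<dots> \<le> norm v * norm u" using norm_cauchy_schwarz[of u v] by (simp add: mult.commute)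
  finally show ?thesis
    using False by (simp add: mult_right_le_imp_le)
qed simp

lemma velG_bounds_of_deriv_bounds:
  fixes x y :: "'a::real_inner" and g g' :: "real \<Rightarrow> real"
  assumes g0: "g 0 = 0"
    and deriv: "\<And>r. r \<in> {0..} \<Longrightarrow> (g has_real_derivative g' r) (at r within {0..})"
    and bounds: "\<And>r. r \<in> {0..R} \<Longrightarrow> m \<le> g' r \<and> g' r \<le> M" and "0 \<le> m"
    and "norm x \<le> R" and "norm y \<le> R"
  shows "m * (norm (x - y))\<^sup>2 \<le> (x - y) \<bullet> (velG g x - velG g y)"
    and "m * norm (x - y) \<le> norm (velG g x - velG g y)"
    and "norm (velG g x - velG g y) \<le> M * norm (x - y)"
proof -
  have diff: "m * (v - u) \<le> g v - g u \<and> g v - g u \<le> M * (v - u)"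
    if "u \<in> {0..R}" "v \<in> {0..R}" "u \<le> v" for u v
    using that by (intro difference_bounds_of_deriv_bounds[OF \<open>u \<le> v\<close> _ deriv bounds]) auto
  have "0 \<le> R" using \<open>norm x \<le> R\<close> norm_ge_zero[of x] by linarith
  then have R: "0 \<in> {0..R}" "norm x \<in> {0..R}" "norm y \<in> {0..R}"
    using assms(5,6) by simp_all
  have gx: "m * norm x \<le> g (norm x)" "g (norm x) \<le> M * norm x"
    and gy: "m * norm y \<le> g (norm y)" "g (norm y) \<le> M * norm y"
    using diff[OF R(1,2)] diff[OF R(1,3)] g0 by simp_all
  have "0 \<le> M"
    using bounds[OF R(1)] \<open>0 \<le> m\<close> by linarith
  have "0 \<le> g (norm x)" "0 \<le> g (norm y)"
    using gx(1) gy(1) mult_nonneg_nonneg[OF \<open>0 \<le> m\<close> norm_ge_zero] by (metis order_trans)+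
  note sym = symmetric_difference_bounds[OF diff \<open>0 \<le> m\<close> R(2,3)]
  show inner: "m * (norm (x - y))\<^sup>2 \<le> (x - y) \<bullet> (velG g x - velG g y)"
    by (rule inner_diff_velG_ge[OF g0 gx(1) gy(1) sym(1)])
  then show "m * norm (x - y) \<le> norm (velG g x - velG g y)"
    by (rule mult_norm_le_of_mult_norm_squared_le_inner)
  show "norm (velG g x - velG g y) \<le> M * norm (x - y)"
    by (rule norm_diff_velG_le[OF g0 \<open>0 \<le> M\<close> \<open>0 \<le> g (norm x)\<close> gx(2)
          \<open>0 \<le> g (norm y)\<close> gy(2) sym(2)])
qed

section \<open>The Cucker--Smale system\<close>

lemma sum_sum_symmetric_scaleR_diff_eq_0:
  fixes v :: "'i \<Rightarrow> 'a::real_vector"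
  assumes "\<And>i k. w i k = w k i"
  shows "(\<Sum>i\<in>I. \<Sum>k\<in>I. w i k *\<^sub>R (v k - v i)) = 0"
proof -
  have "(\<Sum>i\<in>I. \<Sum>k\<in>I. w i k *\<^sub>R v k) = (\<Sum>k\<in>I. \<Sum>i\<in>I. w k i *\<^sub>R v k)"
    by (subst sum.swap) (simp add: assms)
  then show ?thesis
    by (simp add: scaleR_diff_right sum_subtractf)
qed

lemma has_real_derivative_norm_squared:
  fixes f :: "real \<Rightarrow> 'a::real_inner"
  assumes "(f has_vector_derivative f') (at x)"
  shows "((\<lambda>t. (norm (f t))\<^sup>2) has_real_derivative 2 * (f x \<bullet> f')) (at x)"
proof -
  have "(f has_derivative (\<lambda>h. h *\<^sub>R f')) (at x)"
    using assms by (simp add: has_vector_derivative_def)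
  from has_derivative_inner[OF this this]
  have "((\<lambda>t. f t \<bullet> f t) has_derivative (*) (2 * (f x \<bullet> f'))) (at x)"
    by (rule has_derivative_eq_rhs) (auto simp: fun_eq_iff inner_commute algebra_simps)
  then show ?thesis
    unfolding has_field_derivative_def power2_norm_eq_inner .
qed

lemma inner_alignment_force_nonpos:
  fixes x :: "'i \<Rightarrow> 'a::real_inner" and G :: "'a \<Rightarrow> 'a"
  assumes "0 \<le> c" and "\<forall>k\<in>I. 0 \<le> w k" and "\<forall>k\<in>I. norm (x k) \<le> norm (x j)"
    and align: "\<And>u v. norm v \<le> norm u \<Longrightarrow> u \<bullet> G v \<le> u \<bullet> G u"
  shows "x j \<bullet> (c *\<^sub>R (\<Sum>k\<in>I. w k *\<^sub>R (G (x k) - G (x j)))) \<le> 0"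
proof -
  have "x j \<bullet> (c *\<^sub>R (\<Sum>k\<in>I. w k *\<^sub>R (G (x k) - G (x j))))
      = c * (\<Sum>k\<in>I. w k * (x j \<bullet> G (x k) - x j \<bullet> G (x j)))"
    by (simp add: inner_sum_right inner_diff_right)
  also have "\<dots> \<le> 0"
    using assms by (intro mult_nonneg_nonpos sum_nonpos mult_nonneg_nonpos) auto
  finally show ?thesis .
qed

lemma sum_has_vector_derivative_zero_of_symmetric_interaction:
  fixes p q :: "'i \<Rightarrow> real \<Rightarrow> 'a::real_normed_vector" and G :: "'a \<Rightarrow> 'a"
  assumes "finite I"
    and "\<forall>i\<in>I. (p i has_vector_derivative
           c *\<^sub>R (\<Sum>k\<in>I. \<psi> (norm (q k t - q i t)) *\<^sub>R (G (p k t) - G (p i t)))) (at t)"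
  shows "((\<lambda>s. \<Sum>i\<in>I. p i s) has_vector_derivative 0) (at t)"
proof -
  have "((\<lambda>s. \<Sum>i\<in>I. p i s) has_vector_derivative
      (\<Sum>i\<in>I. c *\<^sub>R (\<Sum>k\<in>I. \<psi> (norm (q k t - q i t)) *\<^sub>R (G (p k t) - G (p i t))))) (at t)"
    using assms by (intro has_vector_derivative_sum) auto
  moreover have "(\<Sum>i\<in>I. \<Sum>k\<in>I. \<psi> (norm (q k t - q i t)) *\<^sub>R (G (p k t) - G (p i t))) = 0"
    by (rule sum_sum_symmetric_scaleR_diff_eq_0) (simp add: norm_minus_commute)
  ultimately show ?thesis
    by (simp add: scaleR_sum_right[symmetric])
qed

lemma Max_norm_antimono:
  fixes p q :: "'i \<Rightarrow> real \<Rightarrow> 'a::real_inner" and G :: "'a \<Rightarrow> 'a"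
  assumes fin: "finite I" and "0 \<le> c" and \<psi>: "\<And>r. 0 \<le> r \<Longrightarrow> 0 \<le> \<psi> r"
    and align: "\<And>u v. norm v \<le> norm u \<Longrightarrow> u \<bullet> G v \<le> u \<bullet> G u"
    and cont: "\<forall>i\<in>I. continuous_on {0..} (p i)"
    and ode: "\<forall>i\<in>I. \<forall>t>0. (p i has_vector_derivative
                c *\<^sub>R (\<Sum>k\<in>I. \<psi> (norm (q k t - q i t)) *\<^sub>R (G (p k t) - G (p i t)))) (at t)"
    and "0 \<le> s" and "s \<le> t"
  shows "Max ((\<lambda>i. norm (p i t)) ` I) \<le> Max ((\<lambda>i. norm (p i s)) ` I)"
proof (cases "I = {}")
  case False
  define D where "D i x = c *\<^sub>R (\<Sum>k\<in>I. \<psi> (norm (q k x - q i x)) *\<^sub>R (G (p k x) - G (p i x)))"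
    for i x
  have D: "(p i has_vector_derivative D i x) (at x)" if "i \<in> I" and "0 < x" for i x
    using ode that unfolding D_def by blast
  define C where "C = Max ((\<lambda>i. norm (p i s)) ` I)"
  have C: "norm (p j s) \<le> C" if "j \<in> I" for j
    unfolding C_def using fin that by simp
  have "\<forall>j\<in>I. (norm (p j t))\<^sup>2 \<le> C\<^sup>2"
  proof (rule finite_family_max_principle[OF fin \<open>s \<le> t\<close>, where f' = "\<lambda>j x. 2 * (p j x \<bullet> D j x)"])
    show "\<forall>j\<in>I. continuous_on {s..t} (\<lambda>x. (norm (p j x))\<^sup>2)"
      using cont \<open>0 \<le> s\<close> continuous_on_subset[of "{0..}" _ "{s..t}"]
      by (auto intro!: continuous_intros)
    show "\<forall>j\<in>I. \<forall>x\<in>{s<..<t}. ((\<lambda>x. (norm (p j x))\<^sup>2) has_real_derivative 2 * (p j x \<bullet> D j x)) (at x)"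
      using \<open>0 \<le> s\<close> by (intro ballI has_real_derivative_norm_squared D) auto
    show "\<forall>j\<in>I. \<forall>x\<in>{s<..<t}. (\<forall>k\<in>I. (norm (p k x))\<^sup>2 \<le> (norm (p j x))\<^sup>2) \<longrightarrow> 2 * (p j x \<bullet> D j x) \<le> 0"
    proof (intro ballI impI)
      fix j x assume "j \<in> I" and "\<forall>k\<in>I. (norm (p k x))\<^sup>2 \<le> (norm (p j x))\<^sup>2"
      then have "\<forall>k\<in>I. norm (p k x) \<le> norm (p j x)"
        by (simp add: power2_le_iff_abs_le)
      then have "p j x \<bullet> D j x \<le> 0"
        unfolding D_def using \<open>0 \<le> c\<close> \<psi> align by (intro inner_alignment_force_nonpos) auto
      then show "2 * (p j x \<bullet> D j x) \<le> 0" by simp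
    qed
    show "\<forall>j\<in>I. (norm (p j s))\<^sup>2 \<le> C\<^sup>2"
      using C by (auto intro: power_mono)
  qed
  then have "\<forall>j\<in>I. norm (p j t) \<le> C"
    using C False by (meson all_not_in_conv norm_ge_zero order_trans power2_le_imp_le)
  then show ?thesis
    unfolding C_def using fin False by simp
qed simp

lemma Inf_Sup_norm_image_bounds:
  fixes f :: "real \<Rightarrow> real"
  assumes "0 \<le> R" and "0 < m" and bounds: "\<And>r. r \<in> {0..R} \<Longrightarrow> m \<le> f r \<and> f r \<le> M"
  defines "S \<equiv> {f (norm v) | v :: 'a::euclidean_space. norm v \<le> R}"
  shows "0 < Inf S" and "\<And>r. r \<in> {0..R} \<Longrightarrow> Inf S \<le> f r \<and> f r \<le> Sup S"
proof -
  have "S = f ` {0..R}"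
  proof
    show "S \<subseteq> f ` {0..R}" unfolding S_def by auto
    show "f ` {0..R} \<subseteq> S"
    proof
      fix y assume "y \<in> f ` {0..R}"
      then obtain r where r: "r \<in> {0..R}" "y = f r" by blast
      then have "norm (r *\<^sub>R (SOME i. i \<in> Basis) :: 'a) = r"
        by (simp add: norm_some_Basis)
      with r show "y \<in> S" unfolding S_def by (metis (mono_tags, lifting) atLeastAtMost_iff mem_Collect_eq)
    qed
  qed
  moreover have "bdd_below (f ` {0..R})" and "bdd_above (f ` {0..R})"
    using bounds by (auto intro!: bdd_belowI2[where m=m] bdd_aboveI2[where M=M])
  moreover have "m \<le> Inf (f ` {0..R})"
    using \<open>0 \<le> R\<close> bounds by (intro cINF_greatest) auto
  ultimately show "0 < Inf S" and "\<And>r. r \<in> {0..R} \<Longrightarrow> Inf S \<le> f r \<and> f r \<le> Sup S"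
    using \<open>0 < m\<close> by (auto intro: cINF_lower cSUP_upper)
qed

theorem proposition2p1:
  fixes N :: nat and \<kappa> :: real
    and g g' :: "real \<Rightarrow> real" and \<psi> :: "real \<Rightarrow> real"
    and q p :: "nat \<Rightarrow> real \<Rightarrow> 'a::euclidean_space"
  assumes N: "N \<ge> 1" and kappa: "\<kappa> > 0"
    and g_deriv: "\<forall>r\<ge>0. (g has_real_derivative g' r) (at r within {0..})"
    and g'_cont: "continuous_on {0..} g'"
    and g0: "g 0 = 0"
    and g'_bounds: "\<forall>a b. 0 \<le> a \<longrightarrow> a \<le> b \<longrightarrow>
                      (\<exists>m M. 0 < m \<and> (\<forall>r\<in>{a..b}. m \<le> g' r \<and> g' r \<le> M))"
    and g_cvx: "convex_on {0<..} g \<or> concave_on {0<..} g"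
    and psi_pos: "\<forall>r\<ge>0. \<psi> r > 0"
    and psi_bdd: "bounded (\<psi> ` {0..})"
    and psi_lip: "\<exists>L. L-lipschitz_on {0..} \<psi>"
    and psi_noninc: "\<forall>x y. 0 \<le> x \<longrightarrow> x \<le> y \<longrightarrow> \<psi> y \<le> \<psi> x"
    and q_cont: "\<forall>i\<in>{1..N}. continuous_on {0..} (q i)"
    and p_cont: "\<forall>i\<in>{1..N}. continuous_on {0..} (p i)"
    and q_ode: "\<forall>i\<in>{1..N}. \<forall>t>0. (q i has_vector_derivative velG g (p i t)) (at t)"
    and p_ode: "\<forall>i\<in>{1..N}. \<forall>t>0. (p i has_vector_derivative
                  (\<kappa> / real N) *\<^sub>R (\<Sum>k\<in>{1..N}. \<psi> (norm (q k t - q i t)) *\<^sub>R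
                      (velG g (p k t) - velG g (p i t)))) (at t)"
  defines "P0M \<equiv> Max ((\<lambda>i. norm (p i 0)) ` {1..N})"
    and "MG' \<equiv> Sup {g' (norm v) | v :: 'a. norm v \<le> Max ((\<lambda>i. norm (p i 0)) ` {1..N})}"
    and "mG' \<equiv> Inf {g' (norm v) | v :: 'a. norm v \<le> Max ((\<lambda>i. norm (p i 0)) ` {1..N})}"
  shows "(\<forall>t>0. ((\<lambda>s. \<Sum>k\<in>{1..N}. p k s) has_vector_derivative 0) (at t))
    \<and> (\<forall>s t. 0 \<le> s \<longrightarrow> s \<le> t \<longrightarrow>
          Max ((\<lambda>i. norm (p i t)) ` {1..N}) \<le> Max ((\<lambda>i. norm (p i s)) ` {1..N}))
    \<and> (SUP t\<in>{0..}. Max ((\<lambda>i. norm (p i t)) ` {1..N})) = P0M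
    \<and> (\<forall>t>0. \<forall>i\<in>{1..N}. \<forall>j\<in>{1..N}.
          mG' * norm (p i t - p j t) \<le> norm (velG g (p i t) - velG g (p j t))
        \<and> norm (velG g (p i t) - velG g (p j t)) \<le> MG' * norm (p i t - p j t))
    \<and> (\<exists>\<M>>0. \<forall>t>0. \<forall>i\<in>{1..N}. \<forall>j\<in>{1..N}.
          \<M> * (norm (p i t - p j t))\<^sup>2 \<le> (p i t - p j t) \<bullet> (velG g (p i t) - velG g (p j t)))"
proof -
  have deriv: "\<And>r. r \<in> {0..} \<Longrightarrow> (g has_real_derivative g' r) (at r within {0..})"
    using g_deriv by simp
  have "0 \<le> g' r" if "0 \<le> r" for r
    using g'_bounds[rule_format, OF that order_refl] by force
  then have align: "u \<bullet> velG g v \<le> u \<bullet> velG g u" if "norm v \<le> norm u" for u v :: 'a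
    using inner_velG_le_inner_velG_self_of_deriv_nonneg[OF g0 deriv _ that] by blast
  have conservation: "\<forall>t>0. ((\<lambda>s. \<Sum>k\<in>{1..N}. p k s) has_vector_derivative 0) (at t)"
    using p_ode by (intro allI impI sum_has_vector_derivative_zero_of_symmetric_interaction) auto
  have antimono: "\<forall>s t. 0 \<le> s \<longrightarrow> s \<le> t \<longrightarrow>
      Max ((\<lambda>i. norm (p i t)) ` {1..N}) \<le> Max ((\<lambda>i. norm (p i s)) ` {1..N})"
    using kappa psi_pos
    by (intro allI impI Max_norm_antimono[OF finite_atLeastAtMost _ _ align p_cont p_ode])
      (auto simp: less_imp_le)
  then have sup: "(SUP t\<in>{0..}. Max ((\<lambda>i. norm (p i t)) ` {1..N})) = P0M"
    unfolding P0M_def by (intro cSup_eq_maximum) auto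
  have speed: "norm (p i t) \<le> P0M" if "i \<in> {1..N}" and "0 \<le> t" for i t
    using antimono that Max_ge[of "(\<lambda>i. norm (p i t)) ` {1..N}" "norm (p i t)"]
    unfolding P0M_def by fastforce
  then have "0 \<le> P0M"
    using N by (meson atLeastAtMost_iff norm_ge_zero order_refl order_trans)
  then obtain m M where "0 < m" and mM: "\<And>r. r \<in> {0..P0M} \<Longrightarrow> m \<le> g' r \<and> g' r \<le> M"
    using g'_bounds by blast
  from Inf_Sup_norm_image_bounds[OF \<open>0 \<le> P0M\<close> \<open>0 < m\<close> mM, where 'a='a]
  have "0 < mG'" and g'_range: "\<And>r. r \<in> {0..P0M} \<Longrightarrow> mG' \<le> g' r \<and> g' r \<le> MG'"
    unfolding mG'_def MG'_def P0M_def by simp_all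
  note pair_bounds =
    velG_bounds_of_deriv_bounds[OF g0 deriv g'_range less_imp_le[OF \<open>0 < mG'\<close>] speed speed]
  show ?thesis
    using conservation antimono sup \<open>0 < mG'\<close> pair_bounds by (auto simp: less_imp_le)
qed

end
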